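(* Let $a\in C^1([0,T]\times[-\pi,\pi])$ solve $$\partial_t a+\Big(\int_{-\pi}^x a(t,\bar x)\,d\bar x\Big)\partial_x a-a^2+\frac1\pi\int_{-\pi}^{\pi}a^2\,dx=0,\qquad \int_{-\pi}^\pi a(t,x)dx=0,$$ and set $a_0=a(0,\cdot)$. Assume $\partial_x a_0(x_0^* )=0$ at some point $x_0^*$. Then for all $t\in[0,T]$, $\partial_x a(t,x^*(t))=0$, where $x^*$ is the characteristic starting from $x_0^*$.
   Context: The characteristic starting from $x_0^*$ is the solution of $\frac{d}{dt}x^*(t)=\int_{-\pi}^{x^*(t)}a(t,x)\,dx$, $x^*(0)=x_0^*$. *)

theory Defs
  imports "HOL-Analysis.Analysis"
begin

end

theory Submission
  imports Defs
begin

text \<open>Differentiating the equation in \<open>x\<close> would give a linear ODE for \<open>a\<^sub>x\<close> along the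
  characteristic, but needs second derivatives. Instead compare \<open>a\<close> along \<open>x\<^sup>*\<close> with \<open>a\<close> along the
  linearised neighbouring characteristic \<open>x\<^sup>* + h Phi\<close>, where \<open>Phi = \<partial>x\<^sup>*/\<partial>x\<^sub>0\<^sup>*\<close>. By the
  equation the gap \<open>D\<^sub>h\<close> between the two values satisfies \<open>|D\<^sub>h'| \<le> 2M |D\<^sub>h| + o(h)\<close>, so by
  Gronwall \<open>|D\<^sub>h(t)| \<le> C (|D\<^sub>h(0)| + o(h))\<close>. Dividing by \<open>h\<close> and letting \<open>h \<rightarrow> 0\<^sup>+\<close> gives
  \<open>|a\<^sub>x(t, x\<^sup>*(t))| Phi(t) \<le> C |a\<^sub>x(0, x\<^sub>0\<^sup>*)| = 0\<close>.\<close>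

lemma DERIV_within_nonneg_imp_nondecreasing:
  fixes f f' :: "real \<Rightarrow> real"
  assumes "a \<le> b"
    and f: "\<And>x. x \<in> {a..b} \<Longrightarrow> (f has_real_derivative f' x) (at x within {a..b})"
    and f'_nonneg: "\<And>x. x \<in> {a..b} \<Longrightarrow> 0 \<le> f' x"
  shows "f a \<le> f b"
proof -
  have "\<exists>x\<in>{a..b}. f b - f a = (\<lambda>h. f' x * h) (b - a)"
    using \<open>a \<le> b\<close> f by (intro mvt_very_simple) (auto simp: has_field_derivative_def)
  then obtain x where x: "x \<in> {a..b}" "f b - f a = f' x * (b - a)" by auto
  moreover have "0 \<le> f' x * (b - a)"
    using f'_nonneg[OF x(1)] \<open>a \<le> b\<close> by simp
  ultimately show ?thesis by simp
qed

lemma gronwall_abs_bound: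
  fixes D D' :: "real \<Rightarrow> real"
  assumes D: "\<And>s. s \<in> {0..T} \<Longrightarrow> (D has_real_derivative D' s) (at s within {0..T})"
    and D'_le: "\<And>s. s \<in> {0..T} \<Longrightarrow> \<bar>D' s\<bar> \<le> L * \<bar>D s\<bar> + c"
    and "L \<ge> 0" "c \<ge> 0" and t: "t \<in> {0..T}"
  shows "\<bar>D t\<bar> \<le> exp ((L + 1/2) * t) * (\<bar>D 0\<bar> + c)"
proof -
  define K where "K = 2 * L + 1"
  have "K \<ge> 1" using \<open>L \<ge> 0\<close> by (simp add: K_def)
  then have c_K: "0 \<le> c\<^sup>2 / K" by (intro divide_nonneg_nonneg) auto
  define g where "g s = exp (- K * s) * ((D s)\<^sup>2 + c\<^sup>2 / K)" for s
  \<comment> \<open>\<open>g\<close> is nonincreasing since \<open>2 D D' \<le> 2 L D\<^sup>2 + 2 \<bar>D\<bar> c \<le> K D\<^sup>2 + c\<^sup>2\<close>.\<close>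
  have "g t \<le> g 0"
  proof -
    have "- g 0 \<le> - g t"
    proof (rule DERIV_within_nonneg_imp_nondecreasing[where f = "\<lambda>s. - g s"
        and f' = "\<lambda>s. exp (- K * s) * (K * (D s)\<^sup>2 + c\<^sup>2 - 2 * D s * D' s)"])
      fix s assume s: "s \<in> {0..t}"
      then have sT: "s \<in> {0..T}" using t by auto
      have "(D has_real_derivative D' s) (at s within {0..t})"
        using D[OF sT] t by (auto intro: DERIV_subset)
      then have "((\<lambda>s. - g s) has_real_derivative
          - (exp (- K * s) * (- K) * ((D s)\<^sup>2 + c\<^sup>2 / K) + exp (- K * s) * (2 * D s * D' s)))
          (at s within {0..t})"
        unfolding g_def by (auto intro!: derivative_eq_intros simp: power2_eq_square)
      moreover have "- (exp (- K * s) * (- K) * ((D s)\<^sup>2 + c\<^sup>2 / K) + exp (- K * s) * (2 * D s * D' s))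
          = exp (- K * s) * (K * (D s)\<^sup>2 + c\<^sup>2 - 2 * D s * D' s)"
        using \<open>K \<ge> 1\<close> by (simp add: field_simps)
      ultimately show "((\<lambda>s. - g s) has_real_derivative
          exp (- K * s) * (K * (D s)\<^sup>2 + c\<^sup>2 - 2 * D s * D' s)) (at s within {0..t})"
        by simp
      have "2 * D s * D' s \<le> 2 * \<bar>D s\<bar> * \<bar>D' s\<bar>"
        using abs_ge_self[of "D s * D' s"] by (simp add: abs_mult)
      also have "\<dots> \<le> 2 * \<bar>D s\<bar> * (L * \<bar>D s\<bar> + c)"
        using D'_le[OF sT] by (simp add: mult_left_mono)
      also have "\<dots> \<le> K * (D s)\<^sup>2 + c\<^sup>2"
        using zero_le_power2[of "\<bar>D s\<bar> - c"]
        by (simp add: K_def power2_eq_square algebra_simps)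
      finally show "0 \<le> exp (- K * s) * (K * (D s)\<^sup>2 + c\<^sup>2 - 2 * D s * D' s)"
        by simp
    qed (use t in auto)
    then show ?thesis by simp
  qed
  then have "(D t)\<^sup>2 + c\<^sup>2 / K \<le> exp (K * t) * ((D 0)\<^sup>2 + c\<^sup>2 / K)"
    by (simp add: g_def exp_minus field_simps)
  also have "\<dots> \<le> exp (K * t) * (\<bar>D 0\<bar> + c)\<^sup>2"
  proof -
    have "c\<^sup>2 / K \<le> c\<^sup>2" using \<open>K \<ge> 1\<close> by (simp add: divide_le_eq mult_le_cancel_left1)
    then have "(D 0)\<^sup>2 + c\<^sup>2 / K \<le> (\<bar>D 0\<bar> + c)\<^sup>2"
      using \<open>c \<ge> 0\<close> by (simp add: power2_eq_square algebra_simps add_increasing2)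
    then show ?thesis by simp
  qed
  also have "\<dots> = (exp ((L + 1/2) * t) * (\<bar>D 0\<bar> + c))\<^sup>2"
  proof -
    have "K * t = 2 * ((L + 1/2) * t)" by (simp add: K_def algebra_simps)
    then show ?thesis by (simp only: exp_double power_mult_distrib)
  qed
  finally have "(D t)\<^sup>2 \<le> (exp ((L + 1/2) * t) * (\<bar>D 0\<bar> + c))\<^sup>2"
    using c_K by linarith
  then have "\<bar>D t\<bar>\<^sup>2 \<le> (exp ((L + 1/2) * t) * (\<bar>D 0\<bar> + c))\<^sup>2"
    by (simp only: power2_abs)
  then show ?thesis
    by (rule power2_le_imp_le) (use \<open>c \<ge> 0\<close> in simp)
qed

locale characteristic_of_solution =
  fixes a a_t a_x :: "real \<Rightarrow> real \<Rightarrow> real"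
    and xs :: "real \<Rightarrow> real"
    and T :: real
  assumes C1_deriv: "\<And>t x. t \<in> {0..T} \<Longrightarrow> x \<in> {-pi..pi} \<Longrightarrow>
      ((\<lambda>p. a (fst p) (snd p)) has_derivative (\<lambda>(h, k). a_t t x * h + a_x t x * k))
        (at (t, x) within {0..T} \<times> {-pi..pi})"
    and C1_cont_x: "continuous_on ({0..T} \<times> {-pi..pi}) (\<lambda>p. a_x (fst p) (snd p))"
    and pde: "\<And>t x. t \<in> {0..T} \<Longrightarrow> x \<in> {-pi..pi} \<Longrightarrow>
      a_t t x + integral {-pi..x} (a t) * a_x t x - (a t x)\<^sup>2
        + (1 / pi) * integral {-pi..pi} (\<lambda>y. (a t y)\<^sup>2) = 0"
    and mean_zero: "\<And>t. t \<in> {0..T} \<Longrightarrow> integral {-pi..pi} (a t) = 0"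
    and char_range: "\<And>t. t \<in> {0..T} \<Longrightarrow> xs t \<in> {-pi..pi}"
    and char_ode: "\<And>t. t \<in> {0..T} \<Longrightarrow>
      (xs has_real_derivative integral {-pi..xs t} (a t)) (at t within {0..T})"
begin

definition u :: "real \<Rightarrow> real \<Rightarrow> real" where
  "u t x = integral {-pi..x} (a t)"

lemma a_continuous_on: "continuous_on ({0..T} \<times> {-pi..pi}) (\<lambda>p. a (fst p) (snd p))"
  by (rule has_derivative_continuous_on[where f' = "\<lambda>p (h, k). a_t (fst p) (snd p) * h + a_x (fst p) (snd p) * k"])
    (use C1_deriv in \<open>auto simp: mem_Times_iff\<close>)

lemma a_continuous_on_slice:
  assumes "t \<in> {0..T}"
  shows "continuous_on {-pi..pi} (a t)"
proof -
  have "(\<lambda>x. (t, x)) ` {-pi..pi} \<subseteq> {0..T} \<times> {-pi..pi}" using assms by auto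
  then show ?thesis
    using continuous_on_compose2[OF a_continuous_on continuous_on_Pair[OF continuous_on_const continuous_on_id]]
    by simp
qed

lemma a_has_real_derivative_x:
  assumes t: "t \<in> {0..T}" and x: "x \<in> {-pi..pi}"
  shows "(a t has_real_derivative a_x t x) (at x within {-pi..pi})"
proof -
  have slice: "((\<lambda>y. (t, y)) has_derivative (\<lambda>k. (0, k))) (at x within {-pi..pi})"
    by (auto intro!: derivative_eq_intros)
  have "(\<lambda>y. (t, y)) ` {-pi..pi} \<subseteq> {0..T} \<times> {-pi..pi}"
    using t by auto
  from diff_chain_within[OF slice has_derivative_subset[OF C1_deriv[OF t x] this]]
  have "(a t has_derivative (\<lambda>k. a_x t x * k)) (at x within {-pi..pi})"
    by (simp add: o_def)
  then show ?thesis by (simp add: has_field_derivative_def)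
qed

lemma a_bounded: "\<exists>M>0. \<forall>t\<in>{0..T}. \<forall>x\<in>{-pi..pi}. \<bar>a t x\<bar> \<le> M \<and> \<bar>a_x t x\<bar> \<le> M"
proof -
  have compact: "compact ({0..T} \<times> {-pi..pi::real})" by (intro compact_Times compact_Icc)
  obtain M1 where M1: "\<forall>p\<in>{0..T} \<times> {-pi..pi}. \<bar>a (fst p) (snd p)\<bar> \<le> M1"
    using compact_imp_bounded[OF compact_continuous_image[OF a_continuous_on compact]]
    unfolding bounded_iff by auto
  obtain M2 where M2: "\<forall>p\<in>{0..T} \<times> {-pi..pi}. \<bar>a_x (fst p) (snd p)\<bar> \<le> M2"
    using compact_imp_bounded[OF compact_continuous_image[OF C1_cont_x compact]]
    unfolding bounded_iff by auto
  show ?thesis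
    using M1 M2 by (intro exI[of _ "max 1 (max M1 M2)"]) force
qed

lemma u_has_real_derivative:
  "t \<in> {0..T} \<Longrightarrow> x \<in> {-pi..pi} \<Longrightarrow> (u t has_real_derivative a t x) (at x within {-pi..pi})"
  unfolding u_def[abs_def] by (rule integral_has_real_derivative[OF a_continuous_on_slice])

lemma u_linear_approx:
  assumes t: "t \<in> {0..T}" and x: "x \<in> {-pi..pi}" and y: "y \<in> {-pi..pi}"
    and B: "\<And>z. z \<in> closed_segment x y \<Longrightarrow> \<bar>a t z - c\<bar> \<le> B"
  shows "\<bar>u t y - u t x - c * (y - x)\<bar> \<le> B * \<bar>y - x\<bar>"
proof -
  have "closed_segment x y \<subseteq> {-pi..pi}"
    using x y by (auto simp: closed_segment_eq_real_ivl)
  then have "\<And>z. z \<in> closed_segment x y \<Longrightarrow>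
      ((\<lambda>z. u t z - c * z) has_real_derivative a t z - c) (at z within closed_segment x y)"
    by (auto intro!: derivative_eq_intros DERIV_subset[OF u_has_real_derivative[OF t]])
  then have "norm ((u t y - c * y) - (u t x - c * x)) \<le> B * norm (y - x)"
    by (rule field_differentiable_bound[OF convex_closed_segment]) (use B in auto)
  then show ?thesis
    by (simp add: algebra_simps)
qed

lemma u_uniformly_differentiable:
  assumes e: "e > 0"
  obtains d where "d > 0" and "\<And>t x y. t \<in> {0..T} \<Longrightarrow> x \<in> {-pi..pi} \<Longrightarrow> y \<in> {-pi..pi} \<Longrightarrow>
      \<bar>y - x\<bar> < d \<Longrightarrow> \<bar>u t y - u t x - a t x * (y - x)\<bar> \<le> e * \<bar>y - x\<bar>"
proof -
  have "uniformly_continuous_on ({0..T} \<times> {-pi..pi}) (\<lambda>p. a (fst p) (snd p))"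
    by (intro compact_uniformly_continuous a_continuous_on compact_Times compact_Icc)
  then obtain d where "d > 0" and d: "\<And>p p'. p \<in> {0..T} \<times> {-pi..pi} \<Longrightarrow> p' \<in> {0..T} \<times> {-pi..pi} \<Longrightarrow>
      dist p' p < d \<Longrightarrow> dist (a (fst p') (snd p')) (a (fst p) (snd p)) < e"
    unfolding uniformly_continuous_on_def using e by metis
  show ?thesis
  proof (rule that[OF \<open>d > 0\<close>])
    fix t x y assume t: "t \<in> {0..T}" and x: "x \<in> {-pi..pi}" and y: "y \<in> {-pi..pi}"
      and "\<bar>y - x\<bar> < d"
    show "\<bar>u t y - u t x - a t x * (y - x)\<bar> \<le> e * \<bar>y - x\<bar>"
    proof (rule u_linear_approx[OF t x y])
      fix z assume z: "z \<in> closed_segment x y"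
      then have "z \<in> {-pi..pi}" "\<bar>z - x\<bar> < d"
        using x y \<open>\<bar>y - x\<bar> < d\<close> by (auto simp: closed_segment_eq_real_ivl split: if_splits)
      then have "dist (a t z) (a t x) < e"
        using d[of "(t, x)" "(t, z)"] t x by (simp add: dist_Pair_Pair dist_real_def)
      then show "\<bar>a t z - a t x\<bar> \<le> e" by (simp add: dist_real_def)
    qed
  qed
qed

lemma a_along_char_continuous_on: "continuous_on {0..T} (\<lambda>s. a s (xs s))"
proof -
  have "continuous_on {0..T} xs"
    using char_ode by (intro has_derivative_continuous_on) (auto simp: has_field_derivative_def)
  moreover have "(\<lambda>s. (s, xs s)) ` {0..T} \<subseteq> {0..T} \<times> {-pi..pi}"
    using char_range by auto
  ultimately show ?thesis
    using continuous_on_compose2[OF a_continuous_on continuous_on_Pair[OF continuous_on_id]] by simp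
qed

lemma a_along_path_has_real_derivative:
  assumes Y_range: "\<And>s. s \<in> {0..T} \<Longrightarrow> Y s \<in> {-pi..pi}"
    and Y: "(Y has_real_derivative Y') (at t within {0..T})"
    and t: "t \<in> {0..T}"
  shows "((\<lambda>s. a s (Y s)) has_real_derivative a_t t (Y t) + a_x t (Y t) * Y') (at t within {0..T})"
proof -
  have graph: "((\<lambda>s. (s, Y s)) has_derivative (\<lambda>h. (h, Y' * h))) (at t within {0..T})"
    using Y by (auto intro!: derivative_eq_intros simp: has_field_derivative_def mult.commute)
  have "(\<lambda>s. (s, Y s)) ` {0..T} \<subseteq> {0..T} \<times> {-pi..pi}"
    using Y_range by auto
  from diff_chain_within[OF graph has_derivative_subset[OF C1_deriv[OF t Y_range[OF t]] this]]
  have "((\<lambda>s. a s (Y s)) has_derivative (\<lambda>h. a_t t (Y t) * h + a_x t (Y t) * (Y' * h)))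
      (at t within {0..T})"
    by (simp add: o_def)
  then show ?thesis
    unfolding has_field_derivative_def
    by (rule has_derivative_eq_rhs) (auto simp: algebra_simps)
qed

definition Phi :: "real \<Rightarrow> real" where
  "Phi t = exp (integral {0..t} (\<lambda>s. a s (xs s)))"

lemma Phi_has_real_derivative:
  "t \<in> {0..T} \<Longrightarrow> (Phi has_real_derivative a t (xs t) * Phi t) (at t within {0..T})"
  unfolding Phi_def[abs_def]
  by (rule DERIV_chain2[OF DERIV_exp integral_has_real_derivative[OF a_along_char_continuous_on],
      THEN DERIV_cong]) (simp_all add: mult.commute)

text \<open>The equation replaces \<open>a\<^sub>t + u a\<^sub>x\<close> by \<open>a\<^sup>2\<close> minus a term independent of \<open>x\<close>. Since \<open>Y\<close>
  moves with the linearised velocity, \<open>a\<^sub>x\<close> survives only multiplied by the linearisation error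
  of \<open>u\<close>, which is \<open>o(Y - x\<^sup>*)\<close>.\<close>

lemma linearised_gap_has_real_derivative:
  assumes Y_range: "\<And>s. s \<in> {0..T} \<Longrightarrow> Y s \<in> {-pi..pi}"
    and Y: "(Y has_real_derivative u t (xs t) + a t (xs t) * (Y t - xs t)) (at t within {0..T})"
    and t: "t \<in> {0..T}"
  shows "((\<lambda>s. a s (Y s) - a s (xs s)) has_real_derivative
      (a t (Y t) + a t (xs t)) * (a t (Y t) - a t (xs t))
      - a_x t (Y t) * (u t (Y t) - u t (xs t) - a t (xs t) * (Y t - xs t))) (at t within {0..T})"
proof -
  have xs: "(xs has_real_derivative u t (xs t)) (at t within {0..T})"
    using char_ode[OF t] by (simp add: u_def)
  define I where "I = (1 / pi) * integral {-pi..pi} (\<lambda>y. (a t y)\<^sup>2)"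
  have pde_Y: "a_t t (Y t) = (a t (Y t))\<^sup>2 - u t (Y t) * a_x t (Y t) - I"
    using pde[OF t Y_range[OF t]] by (simp add: u_def I_def algebra_simps)
  have pde_xs: "a_t t (xs t) = (a t (xs t))\<^sup>2 - u t (xs t) * a_x t (xs t) - I"
    using pde[OF t char_range[OF t]] by (simp add: u_def I_def algebra_simps)
  have "a_t t (Y t) + a_x t (Y t) * (u t (xs t) + a t (xs t) * (Y t - xs t))
      - (a_t t (xs t) + a_x t (xs t) * u t (xs t))
    = (a t (Y t) + a t (xs t)) * (a t (Y t) - a t (xs t))
      - a_x t (Y t) * (u t (Y t) - u t (xs t) - a t (xs t) * (Y t - xs t))"
    unfolding pde_Y pde_xs by (simp add: power2_eq_square algebra_simps)
  with DERIV_diff[OF a_along_path_has_real_derivative[OF Y_range Y t]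
      a_along_path_has_real_derivative[OF char_range xs t]]
  show ?thesis by simp
qed

end

locale bounded_characteristic = characteristic_of_solution +
  fixes M :: real
  assumes M_pos: "M > 0"
    and a_le: "\<And>t x. t \<in> {0..T} \<Longrightarrow> x \<in> {-pi..pi} \<Longrightarrow> \<bar>a t x\<bar> \<le> M"
    and a_x_le: "\<And>t x. t \<in> {0..T} \<Longrightarrow> x \<in> {-pi..pi} \<Longrightarrow> \<bar>a_x t x\<bar> \<le> M"
begin

lemma u_lipschitz:
  assumes "t \<in> {0..T}" "x \<in> {-pi..pi}" "y \<in> {-pi..pi}"
  shows "\<bar>u t y - u t x\<bar> \<le> M * \<bar>y - x\<bar>"
proof -
  have "closed_segment x y \<subseteq> {-pi..pi}"
    using assms by (auto simp: closed_segment_eq_real_ivl)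
  then have "\<And>z. z \<in> closed_segment x y \<Longrightarrow> \<bar>a t z - 0\<bar> \<le> M"
    using a_le[OF \<open>t \<in> {0..T}\<close>] by auto
  from u_linear_approx[OF assms this] show ?thesis by simp
qed

text \<open>Since \<open>u(t, \<plusminus>pi) = 0\<close> and \<open>u\<close> is \<open>M\<close>-Lipschitz, a characteristic approaches an endpoint
  at most exponentially fast.\<close>

lemma char_distance_to_endpoint_ge:
  assumes sg: "sg = 1 \<or> sg = -1" and t: "t \<in> {0..T}"
  shows "(pi - sg * xs 0) * exp (- M * t) \<le> pi - sg * xs t"
proof -
  define q where "q s = pi - sg * xs s" for s
  have "exp (M * 0) * q 0 \<le> exp (M * t) * q t"
  proof (rule DERIV_within_nonneg_imp_nondecreasing[where f = "\<lambda>s. exp (M * s) * q s"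
      and f' = "\<lambda>s. exp (M * s) * (M * q s - sg * u s (xs s))"])
    fix s assume s: "s \<in> {0..t}"
    then have sT: "s \<in> {0..T}" using t by auto
    have "(xs has_real_derivative u s (xs s)) (at s within {0..t})"
      using DERIV_subset[OF char_ode[OF sT]] t by (auto simp: u_def)
    then show "((\<lambda>s. exp (M * s) * q s) has_real_derivative
        exp (M * s) * (M * q s - sg * u s (xs s))) (at s within {0..t})"
      unfolding q_def by (auto intro!: derivative_eq_intros simp: algebra_simps)
    have "u s (sg * pi) = 0"
      using sg mean_zero[OF sT] by (auto simp: u_def)
    moreover have "\<bar>xs s - sg * pi\<bar> = q s"
      using sg char_range[OF sT] by (auto simp: q_def)
    ultimately have "\<bar>u s (xs s)\<bar> \<le> M * q s"
      using u_lipschitz[OF sT _ char_range[OF sT], of "sg * pi"] sg by auto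
    then show "0 \<le> exp (M * s) * (M * q s - sg * u s (xs s))"
      using sg by auto
  qed (use t in auto)
  then have "q 0 * exp (- M * t) \<le> q t"
    by (simp add: exp_minus field_simps)
  then show ?thesis by (simp add: q_def)
qed

lemma Phi_le: "t \<in> {0..T} \<Longrightarrow> Phi t \<le> exp (M * t)"
proof -
  assume t: "t \<in> {0..T}"
  have "norm (integral {0..t} (\<lambda>s. a s (xs s)) - integral {0..0} (\<lambda>s. a s (xs s))) \<le> M * norm (t - 0)"
  proof (rule field_differentiable_bound[OF convex_real_interval(5)])
    fix s assume s: "s \<in> {0..t}"
    show "((\<lambda>t. integral {0..t} (\<lambda>s. a s (xs s))) has_field_derivative a s (xs s)) (at s within {0..t})"
      by (rule DERIV_subset[OF integral_has_real_derivative[OF a_along_char_continuous_on]])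
        (use s t in auto)
    show "norm (a s (xs s)) \<le> M"
      using a_le char_range s t by auto
  qed (use t in auto)
  then show ?thesis
    using t by (simp add: Phi_def)
qed

definition side :: real where
  "side = (if xs 0 < pi then 1 else -1)"

lemma side_cases: "side = 1 \<or> side = -1"
  by (simp add: side_def)

lemma side_room: "0 \<le> T \<Longrightarrow> 0 < pi - side * xs 0"
  using char_range[of 0] by (auto simp: side_def)

text \<open>\<open>pert h\<close> is the linearisation of the characteristic through \<open>xs 0 + side * h\<close>; the sign
  \<open>side\<close> makes the perturbation point into the interval.\<close>

definition pert :: "real \<Rightarrow> real \<Rightarrow> real" where
  "pert h s = xs s + side * h * Phi s"

definition gap :: "real \<Rightarrow> real \<Rightarrow> real" where
  "gap h s = a s (pert h s) - a s (xs s)"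

lemma pert_dist: "h \<ge> 0 \<Longrightarrow> \<bar>pert h s - xs s\<bar> = h * Phi s"
  using side_cases by (auto simp: pert_def Phi_def abs_mult)

lemma pert_in_range:
  assumes h: "0 < h" "h * (exp (M * T))\<^sup>2 \<le> pi - side * xs 0" and s: "s \<in> {0..T}"
  shows "pert h s \<in> {-pi..pi}"
proof -
  have "exp (M * s) \<le> exp (M * T)"
    using s M_pos by simp
  then have "Phi s \<le> exp (M * T)"
    using Phi_le[OF s] by linarith
  then have "h * Phi s \<le> h * exp (M * T)"
    using h(1) by simp
  also have "\<dots> \<le> (pi - side * xs 0) * exp (- M * T)"
    using h(2) by (simp add: exp_minus power2_eq_square field_simps)
  also have "\<dots> \<le> (pi - side * xs 0) * exp (- M * s)"
    using s M_pos side_room by (intro mult_left_mono) auto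
  also have "\<dots> \<le> pi - side * xs s"
    by (rule char_distance_to_endpoint_ge[OF side_cases s])
  moreover have "0 < h * Phi s"
    using h(1) by (simp add: Phi_def)
  ultimately show ?thesis
    using side_cases char_range[OF s] by (auto simp: pert_def)
qed

lemma pert_has_real_derivative:
  assumes s: "s \<in> {0..T}"
  shows "(pert h has_real_derivative u s (xs s) + a s (xs s) * (pert h s - xs s)) (at s within {0..T})"
proof -
  have "(pert h has_real_derivative u s (xs s) + side * h * (a s (xs s) * Phi s)) (at s within {0..T})"
    unfolding pert_def[abs_def]
    using char_ode[OF s] Phi_has_real_derivative[OF s]
    by (auto intro!: derivative_eq_intros simp: u_def)
  then show ?thesis
    by (simp add: pert_def algebra_simps)
qed

lemma gap_gronwall:
  assumes h: "0 < h" "h * (exp (M * T))\<^sup>2 \<le> pi - side * xs 0"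
    and err: "\<And>s. s \<in> {0..T} \<Longrightarrow>
      \<bar>u s (pert h s) - u s (xs s) - a s (xs s) * (pert h s - xs s)\<bar> \<le> \<eta>"
    and t: "t \<in> {0..T}"
  shows "\<bar>gap h t\<bar> \<le> exp ((2 * M + 1/2) * t) * (\<bar>gap h 0\<bar> + M * \<eta>)"
proof (rule gronwall_abs_bound[OF _ _ _ _ t])
  have "0 \<in> {0..T}" using t by simp
  then show "0 \<le> M * \<eta>"
    using err M_pos by (intro mult_nonneg_nonneg) (auto intro: order_trans[OF abs_ge_zero])
  fix s assume s: "s \<in> {0..T}"
  note range = pert_in_range[OF h] char_range
  show "(gap h has_real_derivative
      (a s (pert h s) + a s (xs s)) * gap h s
      - a_x s (pert h s) * (u s (pert h s) - u s (xs s) - a s (xs s) * (pert h s - xs s)))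
      (at s within {0..T})"
    unfolding gap_def[abs_def]
    by (rule linearised_gap_has_real_derivative[OF pert_in_range[OF h] pert_has_real_derivative[OF s] s])
  define err_s where "err_s = u s (pert h s) - u s (xs s) - a s (xs s) * (pert h s - xs s)"
  have "\<bar>(a s (pert h s) + a s (xs s)) * gap h s - a_x s (pert h s) * err_s\<bar>
      \<le> \<bar>a s (pert h s) + a s (xs s)\<bar> * \<bar>gap h s\<bar> + \<bar>a_x s (pert h s)\<bar> * \<bar>err_s\<bar>"
    using abs_triangle_ineq4 by (simp add: abs_mult[symmetric])
  also have "\<dots> \<le> 2 * M * \<bar>gap h s\<bar> + M * \<eta>"
  proof (intro add_mono mult_right_mono mult_mono)
    show "\<bar>a s (pert h s) + a s (xs s)\<bar> \<le> 2 * M"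
      using a_le[OF s range(1)[OF s]] a_le[OF s range(2)[OF s]] by linarith
    show "\<bar>a_x s (pert h s)\<bar> \<le> M"
      using a_x_le[OF s range(1)[OF s]] .
    show "\<bar>err_s\<bar> \<le> \<eta>"
      using err[OF s] by (simp add: err_s_def)
  qed (use M_pos in auto)
  finally show "\<bar>(a s (pert h s) + a s (xs s)) * gap h s
      - a_x s (pert h s) * (u s (pert h s) - u s (xs s) - a s (xs s) * (pert h s - xs s))\<bar>
      \<le> 2 * M * \<bar>gap h s\<bar> + M * \<eta>"
    by (simp add: err_s_def)
qed (use M_pos in auto)

lemma eventually_pert_admissible:
  assumes "0 \<le> T"
  shows "\<forall>\<^sub>F h in at_right 0. 0 < h \<and> h * (exp (M * T))\<^sup>2 \<le> pi - side * xs 0"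
proof -
  have "0 < (pi - side * xs 0) / (exp (M * T))\<^sup>2"
    using side_room[OF assms] by simp
  then show ?thesis
    unfolding eventually_at_right_field
    by (intro exI[of _ "(pi - side * xs 0) / (exp (M * T))\<^sup>2"]) (auto simp: field_simps)
qed

lemma eventually_gap_le:
  assumes e: "e > 0" and t: "t \<in> {0..T}"
  shows "\<forall>\<^sub>F h in at_right 0.
    \<bar>gap h t\<bar> \<le> exp ((2 * M + 1/2) * t) * (\<bar>gap h 0\<bar> + M * (e * exp (M * T) * h))"
proof -
  obtain d where "d > 0" and d: "\<And>t x y. t \<in> {0..T} \<Longrightarrow> x \<in> {-pi..pi} \<Longrightarrow> y \<in> {-pi..pi} \<Longrightarrow>
      \<bar>y - x\<bar> < d \<Longrightarrow> \<bar>u t y - u t x - a t x * (y - x)\<bar> \<le> e * \<bar>y - x\<bar>"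
    using u_uniformly_differentiable[OF e] by blast
  have "0 \<le> T" using t by simp
  have "\<forall>\<^sub>F h in at_right 0. h * exp (M * T) < d"
    unfolding eventually_at_right_field using \<open>d > 0\<close>
    by (intro exI[of _ "d / exp (M * T)"]) (auto simp: field_simps)
  with eventually_pert_admissible[OF \<open>0 \<le> T\<close>] show ?thesis
  proof eventually_elim
    case (elim h)
    then have "0 < h" and room: "h * (exp (M * T))\<^sup>2 \<le> pi - side * xs 0" by auto
    show ?case
    proof (rule gap_gronwall[OF \<open>0 < h\<close> room _ t])
      fix s assume s: "s \<in> {0..T}"
      have "exp (M * s) \<le> exp (M * T)"
        using s M_pos by simp
      then have "Phi s \<le> exp (M * T)"
        using Phi_le[OF s] by linarith
      then have dist: "\<bar>pert h s - xs s\<bar> \<le> h * exp (M * T)"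
        using pert_dist[of h s] \<open>0 < h\<close> by simp
      then have "\<bar>u s (pert h s) - u s (xs s) - a s (xs s) * (pert h s - xs s)\<bar>
          \<le> e * \<bar>pert h s - xs s\<bar>"
        using d[OF s char_range[OF s] pert_in_range[OF \<open>0 < h\<close> room s]] elim by simp
      also have "\<dots> \<le> e * exp (M * T) * h"
        using dist e by (simp add: mult_left_mono algebra_simps)
      finally show "\<bar>u s (pert h s) - u s (xs s) - a s (xs s) * (pert h s - xs s)\<bar>
          \<le> e * exp (M * T) * h" .
    qed
  qed
qed

lemma gap_quotient_tendsto:
  assumes t: "t \<in> {0..T}"
  shows "((\<lambda>h. gap h t / h) \<longlongrightarrow> side * Phi t * a_x t (xs t)) (at_right 0)"
proof -
  have "0 \<le> T" using t by simp
  define c where "c = side * Phi t"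
  have "c \<noteq> 0" using side_cases by (auto simp: c_def Phi_def)
  have pert_t: "pert h t = xs t + c * h" for h
    by (simp add: pert_def c_def)
  have "\<forall>\<^sub>F h in at_right 0. pert h t \<in> {-pi..pi} \<and> pert h t \<noteq> xs t"
    using eventually_pert_admissible[OF \<open>0 \<le> T\<close>]
    by eventually_elim (use pert_in_range[OF _ _ t] \<open>c \<noteq> 0\<close> in \<open>auto simp: pert_t\<close>)
  moreover have "((\<lambda>h. pert h t) \<longlongrightarrow> xs t) (at_right 0)"
    unfolding pert_t by (auto intro!: tendsto_eq_intros)
  ultimately have "filterlim (\<lambda>h. pert h t) (at (xs t) within {-pi..pi}) (at_right 0)"
    by (simp add: filterlim_at)
  moreover have "((\<lambda>y. (a t y - a t (xs t)) / (y - xs t)) \<longlongrightarrow> a_x t (xs t)) (at (xs t) within {-pi..pi})"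
    using a_has_real_derivative_x[OF t char_range[OF t]] by (simp add: has_field_derivative_iff)
  ultimately have "((\<lambda>h. (a t (pert h t) - a t (xs t)) / (pert h t - xs t)) \<longlongrightarrow> a_x t (xs t))
      (at_right 0)"
    by (rule filterlim_compose[rotated])
  then have "((\<lambda>h. gap h t / (c * h)) \<longlongrightarrow> a_x t (xs t)) (at_right 0)"
    by (simp add: gap_def pert_t)
  then have "((\<lambda>h. c * (gap h t / (c * h))) \<longlongrightarrow> c * a_x t (xs t)) (at_right 0)"
    by (rule tendsto_mult_left)
  then show ?thesis
    using \<open>c \<noteq> 0\<close> by (simp add: c_def)
qed

lemma a_x_along_char_le:
  assumes t: "t \<in> {0..T}"
  shows "\<bar>a_x t (xs t)\<bar> * Phi t \<le> exp ((2 * M + 1/2) * t) * \<bar>a_x 0 (xs 0)\<bar>"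
proof -
  define K where "K = exp ((2 * M + 1/2) * t)"
  have "0 \<in> {0..T}" using t by simp
  have lim_t: "((\<lambda>h. \<bar>gap h t / h\<bar>) \<longlongrightarrow> \<bar>a_x t (xs t)\<bar> * Phi t) (at_right 0)"
    using tendsto_rabs[OF gap_quotient_tendsto[OF t]] side_cases by (auto simp: abs_mult Phi_def mult.commute)
  have lim_0: "((\<lambda>h. \<bar>gap h 0 / h\<bar>) \<longlongrightarrow> \<bar>a_x 0 (xs 0)\<bar>) (at_right 0)"
    using tendsto_rabs[OF gap_quotient_tendsto[OF \<open>0 \<in> {0..T}\<close>]] side_cases
    by (auto simp: abs_mult Phi_def)
  have bound: "\<bar>a_x t (xs t)\<bar> * Phi t \<le> K * (\<bar>a_x 0 (xs 0)\<bar> + M * (e * exp (M * T)))"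
    if "e > 0" for e
  proof (rule tendsto_le[OF trivial_limit_at_right_real _ lim_t])
    show "((\<lambda>h. K * (\<bar>gap h 0 / h\<bar> + M * (e * exp (M * T))))
        \<longlongrightarrow> K * (\<bar>a_x 0 (xs 0)\<bar> + M * (e * exp (M * T)))) (at_right 0)"
      by (intro tendsto_intros lim_0)
    show "\<forall>\<^sub>F h in at_right 0. \<bar>gap h t / h\<bar> \<le> K * (\<bar>gap h 0 / h\<bar> + M * (e * exp (M * T)))"
      using eventually_gap_le[OF that t] eventually_at_right_less[of 0]
    proof eventually_elim
      case (elim h)
      have "\<bar>gap h t / h\<bar> = \<bar>gap h t\<bar> / h"
        using elim(2) by simp
      also have "\<dots> \<le> K * (\<bar>gap h 0\<bar> + M * (e * exp (M * T) * h)) / h"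
        using elim by (intro divide_right_mono) (auto simp: K_def)
      also have "\<dots> = K * (\<bar>gap h 0 / h\<bar> + M * (e * exp (M * T)))"
        using elim(2) by (simp add: field_simps)
      finally show ?case .
    qed
  qed
  show ?thesis
    unfolding K_def[symmetric]
  proof (rule tendsto_le[OF trivial_limit_at_right_real _ tendsto_const])
    show "((\<lambda>e. K * (\<bar>a_x 0 (xs 0)\<bar> + M * (e * exp (M * T)))) \<longlongrightarrow> K * \<bar>a_x 0 (xs 0)\<bar>)
        (at_right 0)"
      by (auto intro!: tendsto_eq_intros)
    show "\<forall>\<^sub>F e in at_right 0. \<bar>a_x t (xs t)\<bar> * Phi t \<le> K * (\<bar>a_x 0 (xs 0)\<bar> + M * (e * exp (M * T)))"
      using eventually_at_right_less by (rule eventually_mono) (rule bound)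
  qed
qed

end

theorem lemma2p4:
  fixes a a_t a_x :: "real \<Rightarrow> real \<Rightarrow> real"
    and xs :: "real \<Rightarrow> real"
    and T x0 :: real
  assumes C1_deriv: "\<And>t x. t \<in> {0..T} \<Longrightarrow> x \<in> {-pi..pi} \<Longrightarrow>
      ((\<lambda>p. a (fst p) (snd p)) has_derivative (\<lambda>(h, k). a_t t x * h + a_x t x * k))
        (at (t, x) within {0..T} \<times> {-pi..pi})"
    and C1_cont_t: "continuous_on ({0..T} \<times> {-pi..pi}) (\<lambda>p. a_t (fst p) (snd p))"
    and C1_cont_x: "continuous_on ({0..T} \<times> {-pi..pi}) (\<lambda>p. a_x (fst p) (snd p))"
    and pde: "\<And>t x. t \<in> {0..T} \<Longrightarrow> x \<in> {-pi..pi} \<Longrightarrow>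
      a_t t x + integral {-pi..x} (a t) * a_x t x - (a t x)\<^sup>2
        + (1 / pi) * integral {-pi..pi} (\<lambda>y. (a t y)\<^sup>2) = 0"
    and mean_zero: "\<And>t. t \<in> {0..T} \<Longrightarrow> integral {-pi..pi} (a t) = 0"
    and x0_in: "x0 \<in> {-pi..pi}"
    and crit: "a_x 0 x0 = 0"
    and char_init: "xs 0 = x0"
    and char_range: "\<And>t. t \<in> {0..T} \<Longrightarrow> xs t \<in> {-pi..pi}"
    and char_ode: "\<And>t. t \<in> {0..T} \<Longrightarrow>
      (xs has_real_derivative integral {-pi..xs t} (a t)) (at t within {0..T})"
  shows "\<forall>t \<in> {0..T}. a_x t (xs t) = 0"
proof
  interpret characteristic_of_solution a a_t a_x xs T
    by unfold_locales (fact C1_deriv C1_cont_x pde mean_zero char_range char_ode)+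
  obtain M where "M > 0" and M: "\<forall>t\<in>{0..T}. \<forall>x\<in>{-pi..pi}. \<bar>a t x\<bar> \<le> M \<and> \<bar>a_x t x\<bar> \<le> M"
    using a_bounded by blast
  interpret bounded_characteristic a a_t a_x xs T M
    by unfold_locales (use \<open>M > 0\<close> M in auto)
  fix t assume "t \<in> {0..T}"
  then have "\<bar>a_x t (xs t)\<bar> * Phi t \<le> 0"
    using a_x_along_char_le crit char_init by fastforce
  then show "a_x t (xs t) = 0"
    by (simp add: Phi_def mult_le_0_iff)
qed

end
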